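(* Let $(a_n)_{n=1}^N\in\mathcal A_1$ and let $\{\mathcal P_n\}_{n=1}^N$ be a sequence of pyramids. For any partition $\{N_k\}_{k=1}^M$, $M\in\overline{\mathbb N}$, of $[N]$ into nonempty pairwise disjoint subsets, setting $\alpha_k:=\sum_{n\in N_k}a_n>0$, we have $$\sum_{n=1}^N\mathcal P_n^{a_n}=\sum_{k=1}^M\Big(\sum_{n\in N_k}\mathcal P_n^{a_n/\alpha_k}\Big)^{\alpha_k}.$$
   Context: An mm-space is a triple $(X,d_X,\mu_X)$ with $(X,d_X)$ complete separable metric and $\mu_X$ a Borel probability measure; $\mathcal X$ is the set of mm-isomorphism classes. $Y\prec X$ means there is a 1-Lipschitz $f:X\to Y$ with $f_*\mu_X=\mu_Y$. The box distance $\square(X,Y)$ is the infimum of $\max\{\operatorname{dis}(S),1-\pi(S)\}$ over couplings $\pi$ of $\mu_X,\mu_Y$ and Borel $S\subset X\times Y$, $\operatorname{dis}(S)=\sup\{|d_X(x,x')-d_Y(y,y')|:(x,y),(x',y')\in S\}$. A pyramid is a nonempty box-closed subset of $\mathcal X$ closed downward under $\prec$ and directed. $\overline{\mathbb N}=\mathbb N\cup\{\infty\}$, $[N]=\{1,\dots,N\}$ or $\mathbb N$. $\mathcal A_1$: sequences $(a_n)_{n=1}^N$ with $a_n\in(0,1]$, $\sum a_n=1$. For a countable index set $I$, weights $(c_i)_{i\in I}$ in $(0,1]$ with $\sum_ic_i=1$ and pyramids $\mathcal P_i$, the direct sum $\sum_{i\in I}\mathcal P_i^{c_i}$ is the set of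 $X\in\mathcal X$ for which there exist $X_i\in\mathcal P_i$ and 1-Lipschitz $f_i:X_i\to X$ with $\mu_X=\sum_ic_i(f_i)_*\mu_{X_i}$; it is a pyramid. *)

theory Defs
  imports "HOL-Analysis.Analysis" "HOL-Probability.Probability" "HOL-Library.Extended_Nat"
begin

text \<open>Every complete separable metric space has cardinality
  at most the continuum, so every mm-space is (up to mm-isomorphism) represented by a metric
  on a subset of the reals. An mm-space is a pair (d, mu): the carrier is space mu, the metric
  is d restricted to it, and mu is a Borel probability measure.\<close>

type_synonym mm = "(real \<Rightarrow> real \<Rightarrow> real) \<times> real measure"

definition mmd :: "mm \<Rightarrow> real \<Rightarrow> real \<Rightarrow> real" where "mmd X = fst X"
definition mmu :: "mm \<Rightarrow> real measure" where "mmu X = snd X"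
definition mms :: "mm \<Rightarrow> real set" where "mms X = space (mmu X)"

definition mm_space :: "mm \<Rightarrow> bool" where
  "mm_space X \<longleftrightarrow>
     Metric_space (mms X) (mmd X) \<and>
     Metric_space.mcomplete (mms X) (mmd X) \<and>
     separable_space (Metric_space.mtopology (mms X) (mmd X)) \<and>
     sets (mmu X) = sigma_sets (mms X) {U. openin (Metric_space.mtopology (mms X) (mmd X)) U} \<and>
     prob_space (mmu X)"

definition supp :: "mm \<Rightarrow> real set" where
  "supp X = {x \<in> mms X. \<forall>r>0. measure (mmu X) (Metric_space.mball (mms X) (mmd X) x r) > 0}"

definition mm_iso :: "mm \<Rightarrow> mm \<Rightarrow> bool" where
  "mm_iso X Y \<longleftrightarrow> (\<exists>f. bij_betw f (supp X) (supp Y) \<and>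
      (\<forall>x\<in>supp X. \<forall>x'\<in>supp X. mmd Y (f x) (f x') = mmd X x x') \<and>
      (\<forall>A\<in>sets (mmu Y). measure (mmu Y) A = measure (mmu X) (f -` A \<inter> supp X)))"

definition one_lip :: "mm \<Rightarrow> mm \<Rightarrow> (real \<Rightarrow> real) \<Rightarrow> bool" where
  "one_lip X Y f \<longleftrightarrow> f \<in> mms X \<rightarrow> mms Y \<and>
      (\<forall>x\<in>mms X. \<forall>x'\<in>mms X. mmd Y (f x) (f x') \<le> mmd X x x')"

definition push_eq :: "mm \<Rightarrow> mm \<Rightarrow> (real \<Rightarrow> real) \<Rightarrow> bool" where
  "push_eq X Y f \<longleftrightarrow> (\<forall>A\<in>sets (mmu Y). measure (mmu Y) A = measure (mmu X) (f -` A \<inter> mms X))"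

definition lip_dom :: "mm \<Rightarrow> mm \<Rightarrow> bool" (infix "\<prec>\<^sub>L" 50) where
  "Y \<prec>\<^sub>L X \<longleftrightarrow> (\<exists>X' Y' f. mm_space X' \<and> mm_space Y' \<and> mm_iso X X' \<and> mm_iso Y Y' \<and>
       one_lip X' Y' f \<and> push_eq X' Y' f)"

definition coupling :: "mm \<Rightarrow> mm \<Rightarrow> (real \<times> real) measure \<Rightarrow> bool" where
  "coupling X Y \<pi> \<longleftrightarrow> prob_space \<pi> \<and> sets \<pi> = sets (mmu X \<Otimes>\<^sub>M mmu Y) \<and>
      distr \<pi> (mmu X) fst = mmu X \<and> distr \<pi> (mmu Y) snd = mmu Y"

definition dis :: "mm \<Rightarrow> mm \<Rightarrow> (real \<times> real) set \<Rightarrow> ereal" where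
  "dis X Y S = (SUP p\<in>S. SUP q\<in>S. ereal \<bar>mmd X (fst p) (fst q) - mmd Y (snd p) (snd q)\<bar>)"

definition box :: "mm \<Rightarrow> mm \<Rightarrow> ereal" where
  "box X Y = Inf {max (dis X Y S) (ereal (1 - measure \<pi> S)) | \<pi> S.
                  coupling X Y \<pi> \<and> S \<in> sets \<pi>}"

definition box_closed :: "mm set \<Rightarrow> bool" where
  "box_closed P \<longleftrightarrow> (\<forall>X. mm_space X \<longrightarrow> (\<forall>e>0. \<exists>Y\<in>P. box X Y < ereal e) \<longrightarrow> X \<in> P)"

text \<open>Pyramids (as isomorphism-closed sets of representatives).\<close>
definition pyramid :: "mm set \<Rightarrow> bool" where
  "pyramid P \<longleftrightarrow> P \<subseteq> {X. mm_space X} \<and> P \<noteq> {} \<and> box_closed P \<and>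
     (\<forall>X\<in>P. \<forall>Y. mm_space Y \<longrightarrow> Y \<prec>\<^sub>L X \<longrightarrow> Y \<in> P) \<and>
     (\<forall>X\<in>P. \<forall>Y\<in>P. \<exists>Z\<in>P. X \<prec>\<^sub>L Z \<and> Y \<prec>\<^sub>L Z)"

definition direct_sum :: "'i set \<Rightarrow> ('i \<Rightarrow> real) \<Rightarrow> ('i \<Rightarrow> mm set) \<Rightarrow> mm set" where
  "direct_sum I c P = {X. mm_space X \<and>
     (\<exists>Xs f. (\<forall>i\<in>I. Xs i \<in> P i \<and> one_lip (Xs i) X (f i)) \<and>
        (\<forall>A\<in>sets (mmu X).
           ((\<lambda>i. c i * measure (mmu (Xs i)) (f i -` A \<inter> mms (Xs i))) has_sum measure (mmu X) A) I))}"

definition idx :: "enat \<Rightarrow> nat set" where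
  "idx N = {n. 1 \<le> n \<and> enat n \<le> N}"

end

theory Submission
  imports Defs
begin

(*
  Regrouping a direct sum is associativity of mixtures of measures. If
  mu_X = sum_n a_n (f_n)_* mu_{X_n}, then for each block N_k the normalized partial mixture
  alpha_k^-1 sum_{n in N_k} a_n (f_n)_* mu_{X_n}, carried by the metric of X itself, is an
  mm-space Y_k in the inner direct sum, and mu_X = sum_k alpha_k id_* mu_{Y_k}. Conversely, if
  mu_X = sum_k alpha_k (g_k)_* mu_{Y_k} and mu_{Y_k} = sum_{n in N_k} (a_n / alpha_k) (F_kn)_* mu_{X_n},
  then mu_X = sum_n a_n (g_k o F_kn)_* mu_{X_n}. Both directions amount to summing a nonnegative
  series block by block.
*)

section \<open>Series and mixtures of measures\<close>

lemma infsum_pos: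
  fixes f :: "'a \<Rightarrow> real"
  assumes "f summable_on A" "\<And>x. x \<in> A \<Longrightarrow> 0 \<le> f x" "x \<in> A" "0 < f x"
  shows "0 < infsum f A"
  using nonneg_infsum_le_0D[of f A x] assms by fastforce

lemma has_sum_UNION_disjoint_iff:
  fixes F :: "'a \<Rightarrow> real"
  assumes disj: "disjoint_family_on B K"
    and nonneg: "\<And>x. x \<in> (\<Union>k\<in>K. B k) \<Longrightarrow> 0 \<le> F x"
    and blocks: "\<And>k. k \<in> K \<Longrightarrow> (F has_sum G k) (B k)"
  shows "(F has_sum S) (\<Union>k\<in>K. B k) \<longleftrightarrow> (G has_sum S) K"
proof -
  have "inj_on snd (Sigma K B)"
    using disj by (force simp: disjoint_family_on_def inj_on_def)
  moreover have "snd ` Sigma K B = (\<Union>k\<in>K. B k)"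
    by force
  ultimately have "(F has_sum S) (\<Union>k\<in>K. B k) \<longleftrightarrow> ((F \<circ> snd) has_sum S) (Sigma K B)"
    using has_sum_reindex by metis
  also have "\<dots> \<longleftrightarrow> (G has_sum S) K"
  proof
    assume "((F \<circ> snd) has_sum S) (Sigma K B)"
    then show "(G has_sum S) K"
      by (rule has_sum_Sigma') (simp add: blocks)
  next
    assume G: "(G has_sum S) K"
    have "(F \<circ> snd) summable_on Sigma K B"
      by (rule summable_on_SigmaI[where g=G])
        (use blocks has_sum_imp_summable[OF G] nonneg in auto)
    with blocks G show "((F \<circ> snd) has_sum S) (Sigma K B)"
      by (intro has_sum_SigmaI) auto
  qed
  finally show ?thesis .
qed

definition mixture :: "'a measure \<Rightarrow> 'i set \<Rightarrow> ('i \<Rightarrow> real) \<Rightarrow> ('i \<Rightarrow> 'a measure) \<Rightarrow> 'a measure" where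
  "mixture M S c Q = measure_of (space M) (sets M) (\<lambda>A. ennreal (\<Sum>\<^sub>\<infinity>i\<in>S. c i * measure (Q i) A))"

lemma space_mixture [simp]: "space (mixture M S c Q) = space M"
  by (simp add: mixture_def space_measure_of_conv)

lemma sets_mixture [simp]: "sets (mixture M S c Q) = sets M"
  by (simp add: mixture_def sets_measure_of[OF sets.space_closed] sets.sigma_sets_eq)

context
  fixes M :: "'a measure" and S :: "'i set" and c :: "'i \<Rightarrow> real" and Q :: "'i \<Rightarrow> 'a measure"
  assumes c_nonneg: "\<And>i. i \<in> S \<Longrightarrow> 0 \<le> c i"
    and c_summable: "c summable_on S"
    and Q_prob: "\<And>i. i \<in> S \<Longrightarrow> prob_space (Q i)"
    and sets_Q: "\<And>i. i \<in> S \<Longrightarrow> sets (Q i) = sets M"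
begin

lemma summable_mixture: "(\<lambda>i. c i * measure (Q i) A) summable_on S"
proof (rule summable_on_comparison_test[OF c_summable])
  fix i assume i: "i \<in> S"
  have "measure (Q i) A \<le> 1" using Q_prob[OF i] by (rule prob_space.prob_le_1)
  then show "c i * measure (Q i) A \<le> c i"
    using c_nonneg[OF i] by (simp add: mult_left_le)
  show "0 \<le> c i * measure (Q i) A"
    using c_nonneg[OF i] by simp
qed

lemma countably_additive_mixture:
  "countably_additive (sets M) (\<lambda>A. ennreal (\<Sum>\<^sub>\<infinity>i\<in>S. c i * measure (Q i) A))"
  unfolding countably_additive_def
proof (intro allI impI)
  fix A :: "nat \<Rightarrow> 'a set"
  assume A: "range A \<subseteq> sets M" "disjoint_family A" "\<Union> (range A) \<in> sets M"
  define T where "T B = (\<Sum>\<^sub>\<infinity>i\<in>S. c i * measure (Q i) B)" for B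
  define F where "F p = c (fst p) * measure (Q (fst p)) (A (snd p))" for p
  have T: "((\<lambda>i. c i * measure (Q i) B) has_sum T B) S" for B
    unfolding T_def using summable_mixture by (rule has_sum_infsum)
  have inner: "((\<lambda>n. F (i, n)) has_sum c i * measure (Q i) (\<Union> (range A))) UNIV"
    if i: "i \<in> S" for i
  proof -
    interpret Q: prob_space "Q i" by (rule Q_prob[OF i])
    have "(\<lambda>n. measure (Q i) (A n)) sums measure (Q i) (\<Union> (range A))"
      using A sets_Q[OF i] by (intro Q.finite_measure_UNION) auto
    then have "((\<lambda>n. measure (Q i) (A n)) has_sum measure (Q i) (\<Union> (range A))) UNIV"
      by (rule sums_nonneg_imp_has_sum) simp
    then show ?thesis unfolding F_def by (simp add: has_sum_cmult_right)
  qed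
  have "F summable_on S \<times> UNIV"
    using inner has_sum_imp_summable[OF T]
    by (rule summable_on_SigmaI) (auto simp: F_def c_nonneg)
  with inner T have "(F has_sum T (\<Union> (range A))) (S \<times> UNIV)"
    by (rule has_sum_SigmaI)
  then have "((\<lambda>(n, i). F (i, n)) has_sum T (\<Union> (range A))) (UNIV \<times> S)"
    by (rule has_sum_swap[THEN iffD1])
  then have "((\<lambda>n. T (A n)) has_sum T (\<Union> (range A))) UNIV"
    by (rule has_sum_Sigma') (use T in \<open>simp add: F_def\<close>)
  then have "(\<lambda>n. T (A n)) sums T (\<Union> (range A))"
    by (rule has_sum_imp_sums)
  moreover have "0 \<le> T B" for B
    unfolding T_def by (rule infsum_nonneg) (simp add: c_nonneg)
  ultimately show "(\<Sum>n. ennreal (T (A n))) = ennreal (T (\<Union> (range A)))"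
    by (intro suminf_ennreal_eq)
qed

lemma emeasure_mixture:
  assumes "A \<in> sets M"
  shows "emeasure (mixture M S c Q) A = ennreal (\<Sum>\<^sub>\<infinity>i\<in>S. c i * measure (Q i) A)"
  unfolding mixture_def using countably_additive_mixture assms
  by (intro emeasure_measure_of_sigma sets.sigma_algebra_axioms) (auto simp: positive_def)

lemma measure_mixture:
  assumes "A \<in> sets M"
  shows "measure (mixture M S c Q) A = (\<Sum>\<^sub>\<infinity>i\<in>S. c i * measure (Q i) A)"
proof -
  have "0 \<le> (\<Sum>\<^sub>\<infinity>i\<in>S. c i * measure (Q i) A)"
    by (rule infsum_nonneg) (simp add: c_nonneg)
  then show ?thesis
    using emeasure_mixture[OF assms] by (simp add: measure_def)
qed

lemma prob_space_mixture:
  assumes "(c has_sum 1) S"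
  shows "prob_space (mixture M S c Q)"
proof (rule prob_spaceI)
  have "measure (Q i) (space M) = 1" if "i \<in> S" for i
    using Q_prob[OF that] sets_eq_imp_space_eq[OF sets_Q[OF that]] by (metis prob_space.prob_space)
  then have "(\<Sum>\<^sub>\<infinity>i\<in>S. c i * measure (Q i) (space M)) = (\<Sum>\<^sub>\<infinity>i\<in>S. c i)"
    by (intro infsum_cong) simp
  also have "\<dots> = 1" using assms by (rule infsumI)
  finally show "emeasure (mixture M S c Q) (space (mixture M S c Q)) = 1"
    by (simp add: emeasure_mixture)
qed

end

section \<open>Lipschitz maps between mm-spaces\<close>

lemma space_mmu [simp]: "space (mmu X) = mms X"
  by (simp add: mms_def)

lemma one_lip_comp:
  assumes "one_lip X Y f" "one_lip Y Z g"
  shows "one_lip X Z (g \<circ> f)"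
  unfolding one_lip_def
proof (intro conjI ballI)
  show "g \<circ> f \<in> mms X \<rightarrow> mms Z"
    using assms unfolding one_lip_def by auto
  fix x x' assume x: "x \<in> mms X" "x' \<in> mms X"
  then have "f x \<in> mms Y" "f x' \<in> mms Y"
    using assms(1) unfolding one_lip_def by auto
  then have "mmd Z (g (f x)) (g (f x')) \<le> mmd Y (f x) (f x')"
    using assms(2) unfolding one_lip_def by blast
  also have "\<dots> \<le> mmd X x x'"
    using assms(1) x unfolding one_lip_def by blast
  finally show "mmd Z ((g \<circ> f) x) ((g \<circ> f) x') \<le> mmd X x x'"
    by simp
qed

lemma continuous_map_one_lip:
  assumes MX: "Metric_space (mms X) (mmd X)" and MY: "Metric_space (mms Y) (mmd Y)"
    and f: "one_lip X Y f"
  shows "continuous_map (Metric_space.mtopology (mms X) (mmd X))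
           (Metric_space.mtopology (mms Y) (mmd Y)) f"
proof -
  interpret Metric_space "mms X" "mmd X" by (rule MX)
  have "\<exists>\<delta>>0. \<forall>x. x \<in> mms X \<and> mmd X a x < \<delta> \<longrightarrow> mmd Y (f a) (f x) < \<epsilon>"
    if "a \<in> mms X" "\<epsilon> > 0" for a \<epsilon>
    using f that unfolding one_lip_def by (metis le_less_trans)
  moreover have "f ` mms X \<subseteq> mms Y"
    using f unfolding one_lip_def by blast
  ultimately show ?thesis
    by (simp add: metric_continuous_map[OF MY])
qed

lemma measurable_one_lip:
  assumes X: "mm_space X" and Y: "mm_space Y" and f: "one_lip X Y f"
  shows "f \<in> mmu X \<rightarrow>\<^sub>M mmu Y"
proof -
  let ?TX = "Metric_space.mtopology (mms X) (mmd X)"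
  let ?TY = "Metric_space.mtopology (mms Y) (mmd Y)"
  have MX: "Metric_space (mms X) (mmd X)" and MY: "Metric_space (mms Y) (mmd Y)"
    using X Y by (simp_all add: mm_space_def)
  have cont: "continuous_map ?TX ?TY f"
    using MX MY f by (rule continuous_map_one_lip)
  show ?thesis
  proof (rule measurable_sigma_sets)
    show "sets (mmu Y) = sigma_sets (mms Y) {U. openin ?TY U}"
      using Y by (simp add: mm_space_def)
    show "{U. openin ?TY U} \<subseteq> Pow (mms Y)"
      using openin_subset[of ?TY] Metric_space.topspace_mtopology[OF MY] by auto
    show "f \<in> space (mmu X) \<rightarrow> mms Y"
      using f by (simp add: one_lip_def)
  next
    fix U assume "U \<in> {U. openin ?TY U}"
    then have "openin ?TX {x \<in> topspace ?TX. f x \<in> U}"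
      using cont by (simp add: openin_continuous_map_preimage)
    then have "f -` U \<inter> mms X \<in> sigma_sets (mms X) {U. openin ?TX U}"
      by (auto simp: Metric_space.topspace_mtopology[OF MX] vimage_def Int_def conj_commute
               intro: sigma_sets.Basic)
    then show "f -` U \<inter> space (mmu X) \<in> sets (mmu X)"
      using X by (simp add: mm_space_def)
  qed
qed

lemma mm_space_replace_measure:
  assumes "mm_space X" "prob_space \<nu>" "sets \<nu> = sets (mmu X)"
  shows "mm_space (mmd X, \<nu>)"
proof -
  have "space \<nu> = mms X"
    using sets_eq_imp_space_eq[OF assms(3)] by simp
  then show ?thesis
    using assms unfolding mm_space_def by (simp add: mms_def mmd_def mmu_def)
qed

section \<open>Regrouping direct sums\<close>

definition lip_mixture ::
    "'i set \<Rightarrow> ('i \<Rightarrow> real) \<Rightarrow> ('i \<Rightarrow> mm) \<Rightarrow> ('i \<Rightarrow> real \<Rightarrow> real) \<Rightarrow> mm \<Rightarrow> bool"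
  where "lip_mixture I c Xs f X \<longleftrightarrow> (\<forall>i\<in>I. one_lip (Xs i) X (f i)) \<and>
    (\<forall>A\<in>sets (mmu X).
      ((\<lambda>i. c i * measure (mmu (Xs i)) (f i -` A \<inter> mms (Xs i))) has_sum measure (mmu X) A) I)"

lemma mem_direct_sum_iff:
  "X \<in> direct_sum I c P \<longleftrightarrow> mm_space X \<and> (\<exists>Xs f. (\<forall>i\<in>I. Xs i \<in> P i) \<and> lip_mixture I c Xs f X)"
  unfolding direct_sum_def lip_mixture_def by blast

lemma lip_mixture_comp:
  fixes blk :: "'i \<Rightarrow> 'k"
  assumes blk: "\<And>k i. k \<in> K \<Longrightarrow> i \<in> B k \<Longrightarrow> blk i = k"
    and c_nonneg: "\<And>i. i \<in> (\<Union>k\<in>K. B k) \<Longrightarrow> 0 \<le> c i"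
    and \<alpha>: "\<And>k. k \<in> K \<Longrightarrow> \<alpha> k \<noteq> 0"
    and X: "mm_space X" and Ys: "\<And>k. k \<in> K \<Longrightarrow> mm_space (Ys k)"
    and outer: "lip_mixture K \<alpha> Ys g X"
    and inner: "\<And>k. k \<in> K \<Longrightarrow> lip_mixture (B k) (\<lambda>i. c i / \<alpha> k) (Xs k) (f k) (Ys k)"
  shows "lip_mixture (\<Union>k\<in>K. B k) c (\<lambda>i. Xs (blk i) i) (\<lambda>i. g (blk i) \<circ> f (blk i) i) X"
  unfolding lip_mixture_def
proof (intro conjI ballI)
  fix i assume "i \<in> (\<Union>k\<in>K. B k)"
  then obtain k where k: "k \<in> K" "i \<in> B k" by blast
  then show "one_lip (Xs (blk i) i) X (g (blk i) \<circ> f (blk i) i)"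
    using outer inner[OF k(1)] blk[OF k] by (auto simp: lip_mixture_def intro: one_lip_comp)
next
  fix A assume A: "A \<in> sets (mmu X)"
  have disj: "disjoint_family_on B K"
    using blk unfolding disjoint_family_on_def by blast
  have block: "((\<lambda>i. c i * measure (mmu (Xs (blk i) i)) ((g (blk i) \<circ> f (blk i) i) -` A \<inter> mms (Xs (blk i) i)))
      has_sum \<alpha> k * measure (mmu (Ys k)) (g k -` A \<inter> mms (Ys k))) (B k)" if k: "k \<in> K" for k
  proof -
    have "one_lip (Ys k) X (g k)"
      using outer k by (simp add: lip_mixture_def)
    then have "g k -` A \<inter> mms (Ys k) \<in> sets (mmu (Ys k))"
      using measurable_sets[OF measurable_one_lip[OF Ys[OF k] X] A] by simp
    then have "((\<lambda>i. c i / \<alpha> k * measure (mmu (Xs k i)) (f k i -` (g k -` A \<inter> mms (Ys k)) \<inter> mms (Xs k i)))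
        has_sum measure (mmu (Ys k)) (g k -` A \<inter> mms (Ys k))) (B k)"
      using inner[OF k] unfolding lip_mixture_def by blast
    from has_sum_cmult_right[OF this, of "\<alpha> k"] show ?thesis
    proof (rule has_sum_cong[THEN iffD1, rotated])
      fix i assume i: "i \<in> B k"
      have "f k i \<in> mms (Xs k i) \<rightarrow> mms (Ys k)"
        using inner[OF k] i by (simp add: lip_mixture_def one_lip_def)
      then have "f k i -` (g k -` A \<inter> mms (Ys k)) \<inter> mms (Xs k i) = (g k \<circ> f k i) -` A \<inter> mms (Xs k i)"
        by auto
      then show "\<alpha> k * (c i / \<alpha> k * measure (mmu (Xs k i)) (f k i -` (g k -` A \<inter> mms (Ys k)) \<inter> mms (Xs k i)))
          = c i * measure (mmu (Xs (blk i) i)) ((g (blk i) \<circ> f (blk i) i) -` A \<inter> mms (Xs (blk i) i))"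
        using \<alpha>[OF k] blk[OF k i] by simp
    qed
  qed
  have "((\<lambda>k. \<alpha> k * measure (mmu (Ys k)) (g k -` A \<inter> mms (Ys k))) has_sum measure (mmu X) A) K"
    using outer A by (simp add: lip_mixture_def)
  then show "((\<lambda>i. c i * measure (mmu (Xs (blk i) i)) ((g (blk i) \<circ> f (blk i) i) -` A \<inter> mms (Xs (blk i) i)))
      has_sum measure (mmu X) A) (\<Union>k\<in>K. B k)"
    by (subst has_sum_UNION_disjoint_iff[OF disj _ block]) (auto simp: c_nonneg)
qed

definition block_mixture ::
    "mm \<Rightarrow> 'i set \<Rightarrow> ('i \<Rightarrow> real) \<Rightarrow> ('i \<Rightarrow> mm) \<Rightarrow> ('i \<Rightarrow> real \<Rightarrow> real) \<Rightarrow> mm"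
  where "block_mixture X B c Xs f = (mmd X,
    mixture (mmu X) B (\<lambda>i. c i / (\<Sum>\<^sub>\<infinity>j\<in>B. c j)) (\<lambda>i. distr (mmu (Xs i)) (mmu X) (f i)))"

lemma mmd_block_mixture [simp]: "mmd (block_mixture X B c Xs f) = mmd X"
  by (simp add: block_mixture_def mmd_def)

lemma mmu_block_mixture: "mmu (block_mixture X B c Xs f) =
    mixture (mmu X) B (\<lambda>i. c i / (\<Sum>\<^sub>\<infinity>j\<in>B. c j)) (\<lambda>i. distr (mmu (Xs i)) (mmu X) (f i))"
  by (simp add: block_mixture_def mmu_def)

lemma mms_block_mixture [simp]: "mms (block_mixture X B c Xs f) = mms X"
  by (metis mms_def mmu_block_mixture space_mixture)

lemma one_lip_block_mixture_iff [simp]: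
  "one_lip Z (block_mixture X B c Xs f) g \<longleftrightarrow> one_lip Z X g"
  "one_lip (block_mixture X B c Xs f) Z g \<longleftrightarrow> one_lip X Z g"
  by (simp_all add: one_lip_def)

context
  fixes I :: "'i set" and c :: "'i \<Rightarrow> real" and Xs :: "'i \<Rightarrow> mm" and f X
  assumes X: "mm_space X" and Xs: "\<And>i. i \<in> I \<Longrightarrow> mm_space (Xs i)"
    and c_nonneg: "\<And>i. i \<in> I \<Longrightarrow> 0 \<le> c i"
    and mix: "lip_mixture I c Xs f X"
begin

lemma measurable_lip_mixture: "i \<in> I \<Longrightarrow> f i \<in> mmu (Xs i) \<rightarrow>\<^sub>M mmu X"
  using mix X Xs by (auto simp: lip_mixture_def intro: measurable_one_lip)

context
  fixes B :: "'i set"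
  assumes B: "B \<subseteq> I" and c_summable: "c summable_on B" and B_pos: "0 < (\<Sum>\<^sub>\<infinity>i\<in>B. c i)"
begin

lemma has_sum_block_weights: "((\<lambda>i. c i / (\<Sum>\<^sub>\<infinity>j\<in>B. c j)) has_sum 1) B"
  using has_sum_divide_const[OF has_sum_infsum[OF c_summable], of "\<Sum>\<^sub>\<infinity>j\<in>B. c j"] B_pos
  by simp

lemma block_mixture_hyps:
  shows "\<And>i. i \<in> B \<Longrightarrow> 0 \<le> c i / (\<Sum>\<^sub>\<infinity>j\<in>B. c j)"
    and "(\<lambda>i. c i / (\<Sum>\<^sub>\<infinity>j\<in>B. c j)) summable_on B"
    and "\<And>i. i \<in> B \<Longrightarrow> prob_space (distr (mmu (Xs i)) (mmu X) (f i))"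
    and "\<And>i. i \<in> B \<Longrightarrow> sets (distr (mmu (Xs i)) (mmu X) (f i)) = sets (mmu X)"
proof -
  fix i assume i: "i \<in> B"
  then show "0 \<le> c i / (\<Sum>\<^sub>\<infinity>j\<in>B. c j)"
    using B B_pos c_nonneg by auto
  have "prob_space (mmu (Xs i))"
    using Xs i B by (auto simp: mm_space_def)
  then show "prob_space (distr (mmu (Xs i)) (mmu X) (f i))"
    using measurable_lip_mixture i B by (auto intro: prob_space.prob_space_distr)
next
  show "(\<lambda>i. c i / (\<Sum>\<^sub>\<infinity>j\<in>B. c j)) summable_on B"
    using has_sum_block_weights by (rule has_sum_imp_summable)
qed simp

lemma mm_space_block_mixture: "mm_space (block_mixture X B c Xs f)"
  unfolding block_mixture_def
  by (intro mm_space_replace_measure X prob_space_mixture[OF block_mixture_hyps has_sum_block_weights]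
      sets_mixture)

lemma measure_block_mixture:
  assumes A: "A \<in> sets (mmu X)"
  shows "measure (mmu (block_mixture X B c Xs f)) A
    = (\<Sum>\<^sub>\<infinity>i\<in>B. c i / (\<Sum>\<^sub>\<infinity>j\<in>B. c j) * measure (mmu (Xs i)) (f i -` A \<inter> mms (Xs i)))"
proof -
  have "measure (mmu (block_mixture X B c Xs f)) A
      = (\<Sum>\<^sub>\<infinity>i\<in>B. c i / (\<Sum>\<^sub>\<infinity>j\<in>B. c j) * measure (distr (mmu (Xs i)) (mmu X) (f i)) A)"
    unfolding mmu_block_mixture by (rule measure_mixture[OF block_mixture_hyps A])
  also have "\<dots> = (\<Sum>\<^sub>\<infinity>i\<in>B. c i / (\<Sum>\<^sub>\<infinity>j\<in>B. c j) * measure (mmu (Xs i)) (f i -` A \<inter> mms (Xs i)))"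
    using B A by (intro infsum_cong) (simp add: measure_distr[OF measurable_lip_mixture] subset_iff)
  finally show ?thesis .
qed

lemma lip_mixture_block_mixture:
  "lip_mixture B (\<lambda>i. c i / (\<Sum>\<^sub>\<infinity>j\<in>B. c j)) Xs f (block_mixture X B c Xs f)"
  unfolding lip_mixture_def
proof (intro conjI ballI)
  fix i assume "i \<in> B"
  then show "one_lip (Xs i) (block_mixture X B c Xs f) (f i)"
    using mix B by (auto simp: lip_mixture_def)
next
  fix A assume "A \<in> sets (mmu (block_mixture X B c Xs f))"
  then have A: "A \<in> sets (mmu X)"
    by (simp add: mmu_block_mixture)
  have "(\<lambda>i. c i / (\<Sum>\<^sub>\<infinity>j\<in>B. c j) * measure (mmu (Xs i)) (f i -` A \<inter> mms (Xs i))) summable_on B"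
  proof (rule summable_on_cong[THEN iffD1])
    show "(\<lambda>i. c i / (\<Sum>\<^sub>\<infinity>j\<in>B. c j) * measure (distr (mmu (Xs i)) (mmu X) (f i)) A) summable_on B"
      by (rule summable_mixture[OF block_mixture_hyps])
    show "c i / (\<Sum>\<^sub>\<infinity>j\<in>B. c j) * measure (distr (mmu (Xs i)) (mmu X) (f i)) A
        = c i / (\<Sum>\<^sub>\<infinity>j\<in>B. c j) * measure (mmu (Xs i)) (f i -` A \<inter> mms (Xs i))" if "i \<in> B" for i
      using that B A by (simp add: measure_distr[OF measurable_lip_mixture] subset_iff)
  qed
  then show "((\<lambda>i. c i / (\<Sum>\<^sub>\<infinity>j\<in>B. c j) * measure (mmu (Xs i)) (f i -` A \<inter> mms (Xs i)))
      has_sum measure (mmu (block_mixture X B c Xs f)) A) B"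
    unfolding measure_block_mixture[OF A] by (rule has_sum_infsum)
qed

end

lemma lip_mixture_blocks:
  assumes disj: "disjoint_family_on B K" and cover: "(\<Union>k\<in>K. B k) = I"
    and c_summable: "c summable_on I" and pos: "\<And>k. k \<in> K \<Longrightarrow> 0 < (\<Sum>\<^sub>\<infinity>i\<in>B k. c i)"
  shows "lip_mixture K (\<lambda>k. \<Sum>\<^sub>\<infinity>i\<in>B k. c i) (\<lambda>k. block_mixture X (B k) c Xs f) (\<lambda>_. id) X"
  unfolding lip_mixture_def
proof (intro conjI ballI)
  fix k assume "k \<in> K"
  show "one_lip (block_mixture X (B k) c Xs f) X id"
    by (simp add: one_lip_def)
next
  fix A assume A: "A \<in> sets (mmu X)"
  define h where "h i = c i * measure (mmu (Xs i)) (f i -` A \<inter> mms (Xs i))" for i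
  have total: "(h has_sum measure (mmu X) A) (\<Union>k\<in>K. B k)"
    using mix A cover unfolding lip_mixture_def h_def[abs_def] by blast
  have blocks: "(h has_sum (\<Sum>\<^sub>\<infinity>i\<in>B k. c i) * measure (mmu (block_mixture X (B k) c Xs f)) A) (B k)"
    if k: "k \<in> K" for k
  proof -
    have Bk: "B k \<subseteq> I"
      using k cover by blast
    have "h summable_on B k"
      using has_sum_imp_summable[OF mix[unfolded lip_mixture_def, THEN conjunct2, rule_format, OF A]] Bk
      unfolding h_def by (rule summable_on_subset_banach)
    moreover have "(\<Sum>\<^sub>\<infinity>i\<in>B k. c i) * measure (mmu (block_mixture X (B k) c Xs f)) A = (\<Sum>\<^sub>\<infinity>i\<in>B k. h i)"
      using pos[OF k]
      by (simp add: measure_block_mixture[OF Bk summable_on_subset_banach[OF c_summable Bk] pos[OF k] A]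
          h_def flip: infsum_cmult_right')
    ultimately show ?thesis
      by (simp add: has_sum_infsum)
  qed
  have "0 \<le> h i" if "i \<in> (\<Union>k\<in>K. B k)" for i
    using c_nonneg that cover by (simp add: h_def)
  with total have "((\<lambda>k. (\<Sum>\<^sub>\<infinity>i\<in>B k. c i) * measure (mmu (block_mixture X (B k) c Xs f)) A)
      has_sum measure (mmu X) A) K"
    using has_sum_UNION_disjoint_iff[OF disj _ blocks] by blast
  then show "((\<lambda>k. (\<Sum>\<^sub>\<infinity>i\<in>B k. c i) * measure (mmu (block_mixture X (B k) c Xs f))
      (id -` A \<inter> mms (block_mixture X (B k) c Xs f))) has_sum measure (mmu X) A) K"
    using sets.sets_into_space[OF A] by (simp add: Int_absorb2)
qed

end

context
  fixes B :: "'k \<Rightarrow> 'i set" and K :: "'k set" and c :: "'i \<Rightarrow> real" and P :: "'i \<Rightarrow> mm set"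
  assumes disj: "disjoint_family_on B K"
    and c_nonneg: "\<And>i. i \<in> (\<Union>k\<in>K. B k) \<Longrightarrow> 0 \<le> c i"
    and pos: "\<And>k. k \<in> K \<Longrightarrow> 0 < (\<Sum>\<^sub>\<infinity>i\<in>B k. c i)"
begin

lemma direct_sum_subset_nested:
  assumes c_summable: "c summable_on (\<Union>k\<in>K. B k)"
    and P: "\<And>i. i \<in> (\<Union>k\<in>K. B k) \<Longrightarrow> P i \<subseteq> Collect mm_space"
  shows "direct_sum (\<Union>k\<in>K. B k) c P \<subseteq> direct_sum K (\<lambda>k. \<Sum>\<^sub>\<infinity>i\<in>B k. c i)
           (\<lambda>k. direct_sum (B k) (\<lambda>i. c i / (\<Sum>\<^sub>\<infinity>j\<in>B k. c j)) P)"
proof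
  fix X assume "X \<in> direct_sum (\<Union>k\<in>K. B k) c P"
  then obtain Xs f where X: "mm_space X" and XsP: "\<forall>i\<in>(\<Union>k\<in>K. B k). Xs i \<in> P i"
    and mix: "lip_mixture (\<Union>k\<in>K. B k) c Xs f X"
    by (auto simp: mem_direct_sum_iff)
  have Xs: "mm_space (Xs i)" if "i \<in> (\<Union>k\<in>K. B k)" for i
    using XsP P that by blast
  have blocks: "block_mixture X (B k) c Xs f \<in> direct_sum (B k) (\<lambda>i. c i / (\<Sum>\<^sub>\<infinity>j\<in>B k. c j)) P"
    if k: "k \<in> K" for k
  proof -
    have Bk: "B k \<subseteq> (\<Union>k\<in>K. B k)"
      using k by blast
    note hyps = X Xs c_nonneg mix Bk summable_on_subset_banach[OF c_summable Bk] pos[OF k]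
    show ?thesis
      unfolding mem_direct_sum_iff
      using mm_space_block_mixture[OF hyps] lip_mixture_block_mixture[OF hyps] XsP Bk by blast
  qed
  have "lip_mixture K (\<lambda>k. \<Sum>\<^sub>\<infinity>i\<in>B k. c i) (\<lambda>k. block_mixture X (B k) c Xs f) (\<lambda>_. id) X"
    using Xs c_nonneg pos by (intro lip_mixture_blocks[OF X _ _ mix disj refl c_summable]) auto
  with X blocks show "X \<in> direct_sum K (\<lambda>k. \<Sum>\<^sub>\<infinity>i\<in>B k. c i)
      (\<lambda>k. direct_sum (B k) (\<lambda>i. c i / (\<Sum>\<^sub>\<infinity>j\<in>B k. c j)) P)"
    unfolding mem_direct_sum_iff[of X] by (intro conjI exI ballI) auto
qed

lemma nested_subset_direct_sum:
  "direct_sum K (\<lambda>k. \<Sum>\<^sub>\<infinity>i\<in>B k. c i) (\<lambda>k. direct_sum (B k) (\<lambda>i. c i / (\<Sum>\<^sub>\<infinity>j\<in>B k. c j)) P)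
     \<subseteq> direct_sum (\<Union>k\<in>K. B k) c P"
proof
  fix X assume "X \<in> direct_sum K (\<lambda>k. \<Sum>\<^sub>\<infinity>i\<in>B k. c i)
      (\<lambda>k. direct_sum (B k) (\<lambda>i. c i / (\<Sum>\<^sub>\<infinity>j\<in>B k. c j)) P)"
  then obtain Ys g where X: "mm_space X"
    and Ys: "\<forall>k\<in>K. Ys k \<in> direct_sum (B k) (\<lambda>i. c i / (\<Sum>\<^sub>\<infinity>j\<in>B k. c j)) P"
    and outer: "lip_mixture K (\<lambda>k. \<Sum>\<^sub>\<infinity>i\<in>B k. c i) Ys g X"
    by (auto simp: mem_direct_sum_iff)
  obtain Xs f where inner: "\<forall>k\<in>K. mm_space (Ys k) \<and> (\<forall>i\<in>B k. Xs k i \<in> P i) \<and>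
      lip_mixture (B k) (\<lambda>i. c i / (\<Sum>\<^sub>\<infinity>j\<in>B k. c j)) (Xs k) (f k) (Ys k)"
    using Ys unfolding mem_direct_sum_iff by metis
  obtain blk where blk: "\<forall>i\<in>(\<Union>k\<in>K. B k). blk i \<in> K \<and> i \<in> B (blk i)"
    by (metis UN_E)
  have blk_eq: "blk i = k" if "k \<in> K" "i \<in> B k" for k i
    using blk disj that unfolding disjoint_family_on_def by blast
  have "lip_mixture (\<Union>k\<in>K. B k) c (\<lambda>i. Xs (blk i) i) (\<lambda>i. g (blk i) \<circ> f (blk i) i) X"
    using blk_eq c_nonneg X inner outer by (intro lip_mixture_comp) (auto dest: pos)
  then show "X \<in> direct_sum (\<Union>k\<in>K. B k) c P"
    using X inner blk by (auto simp: mem_direct_sum_iff intro!: exI[of _ "\<lambda>i. Xs (blk i) i"])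
qed

end

theorem proposition3p22:
  fixes N M :: enat and a :: "nat \<Rightarrow> real" and P :: "nat \<Rightarrow> mm set"
    and Nk :: "nat \<Rightarrow> nat set"
  assumes a_pos: "\<forall>n\<in>idx N. 0 < a n \<and> a n \<le> 1"
    and a_sum: "(a has_sum 1) (idx N)"
    and pyr: "\<forall>n\<in>idx N. pyramid (P n)"
    and part_ne: "\<forall>k\<in>idx M. Nk k \<noteq> {}"
    and part_disj: "\<forall>k\<in>idx M. \<forall>l\<in>idx M. k \<noteq> l \<longrightarrow> Nk k \<inter> Nk l = {}"
    and part_cover: "(\<Union>k\<in>idx M. Nk k) = idx N"
  shows "direct_sum (idx N) a P =
         direct_sum (idx M) (\<lambda>k. infsum a (Nk k))
           (\<lambda>k. direct_sum (Nk k) (\<lambda>n. a n / infsum a (Nk k)) P)"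
proof -
  have disj: "disjoint_family_on Nk (idx M)"
    using part_disj by (auto simp: disjoint_family_on_def)
  have a_nonneg: "0 \<le> a n" if "n \<in> (\<Union>k\<in>idx M. Nk k)" for n
    using a_pos that part_cover by (auto intro: less_imp_le)
  have a_summable: "a summable_on (\<Union>k\<in>idx M. Nk k)"
    using a_sum part_cover by (auto intro: has_sum_imp_summable)
  have block_pos: "0 < (\<Sum>\<^sub>\<infinity>n\<in>Nk k. a n)" if k: "k \<in> idx M" for k
  proof -
    obtain n where n: "n \<in> Nk k"
      using part_ne k by blast
    have "Nk k \<subseteq> (\<Union>k\<in>idx M. Nk k)"
      using k by blast
    then show ?thesis
      using summable_on_subset_banach[OF a_summable] a_nonneg n a_pos part_cover
      by (intro infsum_pos[of a "Nk k" n]) auto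
  qed
  have "P n \<subseteq> Collect mm_space" if "n \<in> (\<Union>k\<in>idx M. Nk k)" for n
    using pyr that part_cover by (auto simp: pyramid_def)
  then have "direct_sum (\<Union>k\<in>idx M. Nk k) a P = direct_sum (idx M) (\<lambda>k. \<Sum>\<^sub>\<infinity>n\<in>Nk k. a n)
      (\<lambda>k. direct_sum (Nk k) (\<lambda>n. a n / (\<Sum>\<^sub>\<infinity>m\<in>Nk k. a m)) P)"
    using direct_sum_subset_nested[OF disj a_nonneg block_pos a_summable]
      nested_subset_direct_sum[OF disj a_nonneg block_pos] by blast
  then show ?thesis
    by (simp add: part_cover)
qed

end
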